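(* Let $\lambda_1<\dots<\lambda_k$ be real, $I=(i_1,\dots,i_k)$ positive integers with sum $n$, and $\Lambda$ the diagonal matrix with $\lambda_j$ appearing $i_j$ times, in increasing order. Let $\xi_I$ be the vector field on ${\rm Fl}_I(\mathbb R)={\rm SO}(n,\mathbb R)/G$, $G={\rm SO}(n,\mathbb R)\cap({\rm O}(i_1)\times\dots\times{\rm O}(i_k))$, induced by the right-$G$-invariant vector field $M(\Psi)=\big((\Psi\Lambda\Psi^{-1})_+-(\Psi\Lambda\Psi^{-1})_-\big)\Psi$ on ${\rm SO}(n,\mathbb R)$. Then the singular points (zeros) of $\xi_I$ are indexed by the multiset permutations $S_n^I$: they are exactly the cosets $[\Psi]$ for which $\Psi\Lambda\Psi^{-1}$ is diagonal, and $\tau\in S_n^I$ corresponds to the coset $[\Psi]$ with $\Psi\Lambda\Psi^{-1}=\operatorname{diag}(\lambda_{\tau(1)},\dots,\lambda_{\tau(n)})$.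
   Context: For a square matrix $X$, $X_+$ (resp. $X_-$) is its strictly upper (resp. strictly lower) triangular part. $S_n^I$ is the set of surjective maps $\tau\colon\{1,\dots,n\}\to\{1,\dots,k\}$ with $|\tau^{-1}(j)|=i_j$ for all $j$. The coset $[\Psi]\in{\rm SO}(n,\mathbb R)/G$ determines the matrix $\Psi\Lambda\Psi^{-1}$ uniquely. *)

theory Defs
  imports "Jordan_Normal_Form.Determinant" "HOL-Library.FuncSet"
begin

text \<open>Conventions: indices are 0-based. Blocks j < k have sizes I j (all > 0),
  n = (sum over j<k of I j). Matrices are n x n real matrices (Jordan_Normal_Form).\<close>

definition block_of :: "(nat \<Rightarrow> nat) \<Rightarrow> nat \<Rightarrow> nat" where
  "block_of I p = (LEAST j. p < (\<Sum>l\<le>j. I l))"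

definition diag_of :: "nat \<Rightarrow> (nat \<Rightarrow> real) \<Rightarrow> real mat" where
  "diag_of n d = mat n n (\<lambda>(p,q). if p = q then d p else 0)"

definition Lam :: "nat \<Rightarrow> (nat \<Rightarrow> nat) \<Rightarrow> (nat \<Rightarrow> real) \<Rightarrow> real mat" where
  "Lam n I lam = diag_of n (\<lambda>p. lam (block_of I p))"

definition SO_mat :: "nat \<Rightarrow> real mat set" where
  "SO_mat n = {P. P \<in> carrier_mat n n \<and> transpose_mat P * P = 1\<^sub>m n \<and> det P = 1}"

text \<open>G = SO(n) intersected with O(i_1) x ... x O(i_k) (block-diagonal orthogonal matrices).\<close>
definition G_grp :: "nat \<Rightarrow> (nat \<Rightarrow> nat) \<Rightarrow> real mat set" where
  "G_grp n I = {g \<in> SO_mat n. \<forall>p<n. \<forall>q<n. block_of I p \<noteq> block_of I q \<longrightarrow> g $$ (p,q) = 0}"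

definition coset :: "nat \<Rightarrow> (nat \<Rightarrow> nat) \<Rightarrow> real mat \<Rightarrow> real mat set" where
  "coset n I P = (\<lambda>g. P * g) ` G_grp n I"

definition Flag :: "nat \<Rightarrow> (nat \<Rightarrow> nat) \<Rightarrow> real mat set set" where
  "Flag n I = coset n I ` SO_mat n"

definition strict_upper :: "real mat \<Rightarrow> real mat" where
  "strict_upper X = mat (dim_row X) (dim_col X) (\<lambda>(p,q). if p < q then X $$ (p,q) else 0)"

definition strict_lower :: "real mat \<Rightarrow> real mat" where
  "strict_lower X = mat (dim_row X) (dim_col X) (\<lambda>(p,q). if q < p then X $$ (p,q) else 0)"

text \<open>Psi Lambda Psi^{-1}; for Psi in SO(n), Psi^{-1} = Psi^T.\<close>
definition conjL :: "nat \<Rightarrow> (nat \<Rightarrow> nat) \<Rightarrow> (nat \<Rightarrow> real) \<Rightarrow> real mat \<Rightarrow> real mat" where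
  "conjL n I lam P = P * Lam n I lam * transpose_mat P"

definition Mfield :: "nat \<Rightarrow> (nat \<Rightarrow> nat) \<Rightarrow> (nat \<Rightarrow> real) \<Rightarrow> real mat \<Rightarrow> real mat" where
  "Mfield n I lam P = (strict_upper (conjL n I lam P) - strict_lower (conjL n I lam P)) * P"

text \<open>V is a vertical tangent vector at P to the fibre C (a coset), i.e. lies in the
  kernel of the differential of the projection SO(n) -> SO(n)/G: it is the velocity at 0
  of a (entrywise differentiable) curve lying in C and passing through P at time 0.\<close>
definition vertical :: "nat \<Rightarrow> real mat set \<Rightarrow> real mat \<Rightarrow> real mat \<Rightarrow> bool" where
  "vertical n C P V \<longleftrightarrow> (\<exists>\<gamma> :: real \<Rightarrow> real mat.
     (\<forall>t. \<gamma> t \<in> C) \<and> \<gamma> 0 = P \<and>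
     (\<forall>p<n. \<forall>q<n. ((\<lambda>t. \<gamma> t $$ (p,q)) has_real_derivative V $$ (p,q)) (at 0)))"

text \<open>The induced vector field xi_I vanishes at the coset C = [Psi] iff
  d pi_Psi (M(Psi)) = 0, i.e. M(Psi) is vertical (independent of the representative
  by right G-invariance of M).\<close>
definition xi_zero :: "nat \<Rightarrow> (nat \<Rightarrow> nat) \<Rightarrow> (nat \<Rightarrow> real) \<Rightarrow> real mat set \<Rightarrow> bool" where
  "xi_zero n I lam C \<longleftrightarrow> (\<exists>P\<in>C. vertical n C P (Mfield n I lam P))"

definition is_diag :: "real mat \<Rightarrow> bool" where
  "is_diag X \<longleftrightarrow> (\<forall>p<dim_row X. \<forall>q<dim_col X. p \<noteq> q \<longrightarrow> X $$ (p,q) = 0)"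

text \<open>S_n^I: maps tau : {0..<n} -> {0..<k} with |tau^{-1}(j)| = I j (surjective since I j > 0).\<close>
definition multiset_perms :: "nat \<Rightarrow> nat \<Rightarrow> (nat \<Rightarrow> nat) \<Rightarrow> (nat \<Rightarrow> nat) set" where
  "multiset_perms n k I = {\<tau> \<in> {0..<n} \<rightarrow>\<^sub>E {0..<k}. \<forall>j<k. card {p \<in> {0..<n}. \<tau> p = j} = I j}"

end

theory Submission
  imports Defs
begin

text \<open>Right multiplication by G moves along the fibres, so a vertical vector at \<Psi> has the form
  \<Psi>X with X block diagonal, and block-diagonal matrices commute with \<Lambda>. Write A = \<Psi>\<Lambda>\<Psi>^T and
  M(\<Psi>) = B\<Psi> with B = A_+ - A_-. If M(\<Psi>) is vertical, then B = \<Psi>X\<Psi>^T commutes with A; as A is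
  symmetric, the diagonal entries of BA - AB compare the parts of each row of A right and left of the diagonal, and
  induction over the rows forces A to be diagonal. Conversely, a diagonal A gives B = 0.

  A diagonal A equals diag(\<lambda>_\<tau>(1), ..., \<lambda>_\<tau>(n)), where \<tau>(p) is the block of any column in which row p of
  \<Psi> is nonzero; counting the squared entries of \<Psi> by rows and by columns shows that \<tau> takes the
  value j exactly i_j times. Every such \<tau> arises from a permutation matrix (with one row negated if
  necessary), and two \<Psi> with the same A differ by a matrix commuting with \<Lambda>, i.e. by an element
  of G.\<close>

lemma index_mult_mat_sum:
  assumes "A \<in> carrier_mat n m" "B \<in> carrier_mat m r" "i < n" "j < r"
  shows "(A * B) $$ (i,j) = (\<Sum>l<m. A $$ (i,l) * B $$ (l,j))"
  using assms by (auto simp: scalar_prod_def lessThan_atLeast0)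

lemma mult_carrier_mat_square [simp]:
  "A \<in> carrier_mat n n \<Longrightarrow> B \<in> carrier_mat n n \<Longrightarrow> A * B \<in> carrier_mat n n"
  by (rule mult_carrier_mat)

lemma diag_of_eq_mat_diag: "diag_of n d = mat_diag n d"
  unfolding diag_of_def mat_diag_def by (rule eq_matI) auto

lemma diag_of_carrier [simp]: "diag_of n d \<in> carrier_mat n n"
  by (simp add: diag_of_def)

lemma dim_diag_of [simp]: "dim_row (diag_of n d) = n" "dim_col (diag_of n d) = n"
  by (simp_all add: diag_of_def)

lemma index_diag_of [simp]:
  "p < n \<Longrightarrow> q < n \<Longrightarrow> diag_of n d $$ (p,q) = (if p = q then d p else 0)"
  by (simp add: diag_of_def)

lemma transpose_diag_of [simp]: "transpose_mat (diag_of n d) = diag_of n d"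
  by (rule eq_matI) auto

lemma index_mult_diag_of_right:
  "X \<in> carrier_mat m n \<Longrightarrow> p < m \<Longrightarrow> q < n \<Longrightarrow> (X * diag_of n d) $$ (p,q) = X $$ (p,q) * d q"
  by (simp add: diag_of_eq_mat_diag mat_diag_mult_right)

lemma index_mult_diag_of_left:
  "X \<in> carrier_mat n m \<Longrightarrow> p < n \<Longrightarrow> q < m \<Longrightarrow> (diag_of n d * X) $$ (p,q) = d p * X $$ (p,q)"
  by (simp add: diag_of_eq_mat_diag mat_diag_mult_left)

lemma diag_of_mult_diag_of: "diag_of n d * diag_of n e = diag_of n (\<lambda>p. d p * e p)"
  by (simp add: diag_of_eq_mat_diag)

lemma is_diag_diag_of: "is_diag (diag_of n d)"
  by (simp add: is_diag_def)

lemma is_diag_eq_diag_of: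
  "A \<in> carrier_mat n n \<Longrightarrow> is_diag A \<Longrightarrow> A = diag_of n (\<lambda>p. A $$ (p,p))"
  by (rule eq_matI) (auto simp: is_diag_def)

lemma commute_diag_of_iff:
  assumes X: "X \<in> carrier_mat n n"
  shows "X * diag_of n d = diag_of n d * X \<longleftrightarrow> (\<forall>p<n. \<forall>q<n. d p \<noteq> d q \<longrightarrow> X $$ (p,q) = 0)"
proof -
  have "X * diag_of n d = diag_of n d * X \<longleftrightarrow>
        (\<forall>p<n. \<forall>q<n. (X * diag_of n d) $$ (p,q) = (diag_of n d * X) $$ (p,q))"
    using X by (auto simp: mat_eq_iff)
  also have "\<dots> \<longleftrightarrow> (\<forall>p<n. \<forall>q<n. X $$ (p,q) * d q = d p * X $$ (p,q))"
    using X by (simp add: index_mult_diag_of_right index_mult_diag_of_left del: index_mult_mat)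
  finally show ?thesis
    by (metis mult.commute mult_cancel_left)
qed

lemma SO_mat_carrier: "P \<in> SO_mat n \<Longrightarrow> P \<in> carrier_mat n n"
  by (simp add: SO_mat_def)

lemma SO_mat_transpose_mult: "P \<in> SO_mat n \<Longrightarrow> transpose_mat P * P = 1\<^sub>m n"
  by (simp add: SO_mat_def)

lemma SO_mat_mult_transpose: "P \<in> SO_mat n \<Longrightarrow> P * transpose_mat P = 1\<^sub>m n"
  unfolding SO_mat_def using mat_mult_left_right_inverse[of "transpose_mat P" n P] by auto

lemma one_SO_mat: "1\<^sub>m n \<in> SO_mat n"
  by (simp add: SO_mat_def)

lemma SO_mat_mult:
  assumes "P \<in> SO_mat n" "Q \<in> SO_mat n"
  shows "P * Q \<in> SO_mat n"
proof -
  have c: "P \<in> carrier_mat n n" "Q \<in> carrier_mat n n"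
    using assms by (auto simp: SO_mat_def)
  have "transpose_mat (P * Q) * (P * Q) = transpose_mat Q * (transpose_mat P * P) * Q"
    using c by (simp add: transpose_mult[of _ n n _ n] assoc_mult_mat[of _ n n _ n _ n])
  also have "\<dots> = 1\<^sub>m n"
    using assms c by (auto simp: SO_mat_def)
  finally show ?thesis
    using assms c by (auto simp: SO_mat_def det_mult)
qed

lemma SO_mat_transpose: "P \<in> SO_mat n \<Longrightarrow> transpose_mat P \<in> SO_mat n"
  using SO_mat_mult_transpose[of P n] by (auto simp: SO_mat_def det_transpose)

section \<open>Blocks, the subgroup G and \<Lambda>\<close>

lemma block_of_bounds:
  assumes "q < (\<Sum>j<k. I j)"
  shows "block_of I q < k \<and> (\<Sum>l<block_of I q. I l) \<le> q \<and> q < (\<Sum>l<block_of I q. I l) + I (block_of I q)"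
proof -
  let ?P = "\<lambda>j. q < (\<Sum>l\<le>j. I l)"
  have k0: "k > 0"
    using assms by (cases k) auto
  have "{..k-1} = {..<k}"
    using k0 by auto
  then have Pk: "?P (k-1)"
    using assms by simp
  have b: "block_of I q = (LEAST j. ?P j)"
    by (simp add: block_of_def)
  have Pb: "?P (block_of I q)"
    unfolding b by (rule LeastI[of ?P, OF Pk])
  have le: "block_of I q \<le> k - 1"
    unfolding b by (rule Least_le[of ?P, OF Pk])
  have lo: "(\<Sum>l<block_of I q. I l) \<le> q"
  proof (cases "block_of I q")
    case (Suc m)
    then have "\<not> ?P m"
      using not_less_Least[of m ?P] b by simp
    then show ?thesis
      using Suc by (simp add: lessThan_Suc_atMost)
  qed simp
  have "(\<Sum>l\<le>block_of I q. I l) = (\<Sum>l<block_of I q. I l) + I (block_of I q)"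
    by (simp add: lessThan_Suc_atMost[symmetric])
  then show ?thesis
    using Pb le lo k0 by auto
qed

lemma block_of_eq_iff:
  assumes "q < (\<Sum>j<k. I j)" "j < k"
  shows "block_of I q = j \<longleftrightarrow> (\<Sum>l<j. I l) \<le> q \<and> q < (\<Sum>l<j. I l) + I j"
proof
  assume "block_of I q = j"
  then show "(\<Sum>l<j. I l) \<le> q \<and> q < (\<Sum>l<j. I l) + I j"
    using block_of_bounds[OF assms(1)] by auto
next
  assume h: "(\<Sum>l<j. I l) \<le> q \<and> q < (\<Sum>l<j. I l) + I j"
  let ?P = "\<lambda>j. q < (\<Sum>l\<le>j. I l)"
  have b: "block_of I q = (LEAST j. ?P j)"
    by (simp add: block_of_def)
  have Pj: "?P j"
    using h by (simp add: lessThan_Suc_atMost[symmetric])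
  have "block_of I q \<le> j"
    unfolding b by (rule Least_le[of ?P, OF Pj])
  moreover have "\<not> block_of I q < j"
  proof
    assume lt: "block_of I q < j"
    have "(\<Sum>l\<le>block_of I q. I l) \<le> (\<Sum>l<j. I l)"
      by (rule sum_mono2) (use lt in auto)
    moreover have "?P (block_of I q)"
      unfolding b by (rule LeastI[of ?P, OF Pj])
    ultimately show False
      using h by simp
  qed
  ultimately show "block_of I q = j"
    by simp
qed

lemma card_block_of_eq:
  assumes "j < k"
  shows "card {q \<in> {0..<(\<Sum>j<k. I j)}. block_of I q = j} = I j"
proof -
  have "(\<Sum>l<j. I l) + I j = (\<Sum>l<Suc j. I l)"
    by simp
  also have "\<dots> \<le> (\<Sum>l<k. I l)"
    by (rule sum_mono2) (use assms in auto)
  finally have "{q \<in> {0..<(\<Sum>j<k. I j)}. block_of I q = j} = {(\<Sum>l<j. I l)..<(\<Sum>l<j. I l) + I j}"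
    using block_of_bounds[of _ I k] by (auto simp: block_of_eq_iff[OF _ assms])
  then show ?thesis
    by simp
qed

definition block_diagonal :: "nat \<Rightarrow> (nat \<Rightarrow> nat) \<Rightarrow> real mat \<Rightarrow> bool" where
  "block_diagonal n I X \<longleftrightarrow> (\<forall>p<n. \<forall>q<n. block_of I p \<noteq> block_of I q \<longrightarrow> X $$ (p,q) = 0)"

lemma G_grp_iff: "g \<in> G_grp n I \<longleftrightarrow> g \<in> SO_mat n \<and> block_diagonal n I g"
  by (simp add: G_grp_def block_diagonal_def)

lemma G_grp_carrier: "g \<in> G_grp n I \<Longrightarrow> g \<in> carrier_mat n n"
  by (simp add: G_grp_iff SO_mat_carrier)

lemma block_diagonal_mult:
  assumes "X \<in> carrier_mat n n" "Y \<in> carrier_mat n n" "block_diagonal n I X" "block_diagonal n I Y"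
  shows "block_diagonal n I (X * Y)"
  unfolding block_diagonal_def
proof (intro allI impI)
  fix p q
  assume pq: "p < n" "q < n" "block_of I p \<noteq> block_of I q"
  have "X $$ (p,l) * Y $$ (l,q) = 0" if "l < n" for l
    using assms(3,4) pq that unfolding block_diagonal_def by (cases "block_of I p = block_of I l") auto
  then have "(\<Sum>l<n. X $$ (p,l) * Y $$ (l,q)) = 0"
    by (intro sum.neutral) auto
  then show "(X * Y) $$ (p,q) = 0"
    using assms pq by (simp add: index_mult_mat_sum[of _ n n] del: index_mult_mat)
qed

lemma block_diagonal_transpose:
  "X \<in> carrier_mat n n \<Longrightarrow> block_diagonal n I X \<Longrightarrow> block_diagonal n I (transpose_mat X)"
  by (auto simp: block_diagonal_def)

lemma G_grp_mult: "g \<in> G_grp n I \<Longrightarrow> h \<in> G_grp n I \<Longrightarrow> g * h \<in> G_grp n I"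
  by (auto simp: G_grp_iff SO_mat_mult intro!: block_diagonal_mult dest: SO_mat_carrier)

lemma G_grp_transpose: "g \<in> G_grp n I \<Longrightarrow> transpose_mat g \<in> G_grp n I"
  by (auto simp: G_grp_iff SO_mat_transpose intro!: block_diagonal_transpose dest: SO_mat_carrier)

lemma one_G_grp: "1\<^sub>m n \<in> G_grp n I"
  by (auto simp: G_grp_iff one_SO_mat block_diagonal_def)

lemma coset_self: "Q \<in> carrier_mat n n \<Longrightarrow> Q \<in> coset n I Q"
  unfolding coset_def using one_G_grp[of n I] by (auto intro!: image_eqI[where x="1\<^sub>m n"])

lemma coset_mult_G_grp:
  assumes Q: "Q \<in> carrier_mat n n" and g: "g \<in> G_grp n I"
  shows "coset n I (Q * g) = coset n I Q"
proof
  have gc: "g \<in> carrier_mat n n"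
    using g by (rule G_grp_carrier)
  show "coset n I (Q * g) \<subseteq> coset n I Q"
  proof
    fix X
    assume "X \<in> coset n I (Q * g)"
    then obtain h where h: "h \<in> G_grp n I" "X = Q * g * h"
      by (auto simp: coset_def)
    then have "X = Q * (g * h)"
      using Q gc G_grp_carrier[OF h(1)] by simp
    then show "X \<in> coset n I Q"
      using G_grp_mult[OF g h(1)] by (auto simp: coset_def)
  qed
  show "coset n I Q \<subseteq> coset n I (Q * g)"
  proof
    fix X
    assume "X \<in> coset n I Q"
    then obtain h where h: "h \<in> G_grp n I" "X = Q * h"
      by (auto simp: coset_def)
    have hc: "h \<in> carrier_mat n n"
      using h(1) by (rule G_grp_carrier)
    have "Q * g * (transpose_mat g * h) = Q * (g * transpose_mat g) * h"
      using Q gc hc by (simp add: assoc_mult_mat[of _ n n _ n _ n])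
    also have "\<dots> = X"
      using h Q hc SO_mat_mult_transpose[of g n] g by (simp add: G_grp_iff)
    finally show "X \<in> coset n I (Q * g)"
      using G_grp_mult[OF G_grp_transpose[OF g] h(1)] unfolding coset_def by auto
  qed
qed

lemma coset_eq_if_mem:
  assumes "P0 \<in> SO_mat n" "P \<in> coset n I P0"
  shows "P \<in> SO_mat n" "coset n I P = coset n I P0"
proof -
  obtain g where g: "g \<in> G_grp n I" "P = P0 * g"
    using assms(2) by (auto simp: coset_def)
  then show "P \<in> SO_mat n"
    using assms(1) by (simp add: G_grp_iff SO_mat_mult)
  show "coset n I P = coset n I P0"
    using g coset_mult_G_grp[OF SO_mat_carrier[OF assms(1)]] by simp
qed

lemma Lam_carrier [simp]: "Lam n I lam \<in> carrier_mat n n"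
  by (simp add: Lam_def)

lemma transpose_Lam [simp]: "transpose_mat (Lam n I lam) = Lam n I lam"
  by (simp add: Lam_def)

lemma block_diagonal_commute_Lam:
  "X \<in> carrier_mat n n \<Longrightarrow> block_diagonal n I X \<Longrightarrow> X * Lam n I lam = Lam n I lam * X"
  unfolding Lam_def by (simp add: commute_diag_of_iff block_diagonal_def) metis

lemma block_diagonal_if_commute_Lam:
  assumes lam: "inj_on lam {..<k}" and n: "n = (\<Sum>j<k. I j)"
    and X: "X \<in> carrier_mat n n" and comm: "X * Lam n I lam = Lam n I lam * X"
  shows "block_diagonal n I X"
  unfolding block_diagonal_def
proof (intro allI impI)
  fix p q
  assume pq: "p < n" "q < n" "block_of I p \<noteq> block_of I q"
  then have "block_of I p < k" "block_of I q < k"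
    using block_of_bounds n by blast+
  then have "lam (block_of I p) \<noteq> lam (block_of I q)"
    using lam pq(3) by (auto dest: inj_onD)
  then show "X $$ (p,q) = 0"
    using comm pq X by (auto simp: Lam_def commute_diag_of_iff)
qed

lemma conjL_carrier [simp]: "P \<in> carrier_mat n n \<Longrightarrow> conjL n I lam P \<in> carrier_mat n n"
  by (simp add: conjL_def)

lemma transpose_conjL: "P \<in> carrier_mat n n \<Longrightarrow> transpose_mat (conjL n I lam P) = conjL n I lam P"
  unfolding conjL_def by (simp add: transpose_mult[of _ n n _ n] assoc_mult_mat[of _ n n _ n _ n])

lemma conjL_mult_G_grp:
  assumes P: "P \<in> carrier_mat n n" and g: "g \<in> G_grp n I"
  shows "conjL n I lam (P * g) = conjL n I lam P"
proof -
  have gc: "g \<in> carrier_mat n n"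
    using g by (rule G_grp_carrier)
  have gL: "g * Lam n I lam = Lam n I lam * g"
    using g gc by (intro block_diagonal_commute_Lam) (auto simp: G_grp_iff)
  have "conjL n I lam (P * g) = P * (g * Lam n I lam) * (transpose_mat g * transpose_mat P)"
    unfolding conjL_def using P gc by (simp add: transpose_mult[of _ n n _ n] assoc_mult_mat[of _ n n _ n _ n])
  also have "\<dots> = P * Lam n I lam * (g * transpose_mat g) * transpose_mat P"
    unfolding gL using P gc by (simp add: assoc_mult_mat[of _ n n _ n _ n])
  also have "\<dots> = conjL n I lam P"
    using SO_mat_mult_transpose[of g n] g P by (simp add: G_grp_iff conjL_def right_mult_one_mat[of _ n n])
  finally show ?thesis .
qed

lemma commute_conj_orthogonal:
  fixes P X L :: "'a :: comm_ring_1 mat"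
  assumes c: "P \<in> carrier_mat n n" "X \<in> carrier_mat n n" "L \<in> carrier_mat n n"
    and P: "transpose_mat P * P = 1\<^sub>m n" and XL: "X * L = L * X"
  shows "(P * X * transpose_mat P) * (P * L * transpose_mat P) = (P * L * transpose_mat P) * (P * X * transpose_mat P)"
proof -
  have "(P * X * transpose_mat P) * (P * L * transpose_mat P) = P * X * (transpose_mat P * P) * L * transpose_mat P"
    using c by (simp add: assoc_mult_mat[of _ n n _ n _ n])
  also have "\<dots> = P * (X * L) * transpose_mat P"
    using c P by (simp add: assoc_mult_mat[of _ n n _ n _ n])
  also have "\<dots> = P * L * (transpose_mat P * P) * X * transpose_mat P"
    using c P XL by (simp add: assoc_mult_mat[of _ n n _ n _ n])
  also have "\<dots> = (P * L * transpose_mat P) * (P * X * transpose_mat P)"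
    using c by (simp add: assoc_mult_mat[of _ n n _ n _ n])
  finally show ?thesis .
qed

section \<open>Zeros of the vector field\<close>

lemma is_diag_if_commute_skew_part:
  fixes A :: "real mat"
  assumes A: "A \<in> carrier_mat n n" and sym: "transpose_mat A = A"
    and comm: "(strict_upper A - strict_lower A) * A = A * (strict_upper A - strict_lower A)"
  shows "is_diag A"
proof -
  define B where "B = strict_upper A - strict_lower A"
  have Bc: "B \<in> carrier_mat n n"
    using A unfolding B_def strict_upper_def strict_lower_def by (intro minus_carrier_mat) auto
  have Aij: "A $$ (j,i) = A $$ (i,j)" if "i < n" "j < n" for i j
    using that A arg_cong[OF sym, of "\<lambda>M. M $$ (i,j)"] by simp
  have Bij: "B $$ (i,j) = (if i < j then A $$ (i,j) else if j < i then - A $$ (i,j) else 0)"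
    if "i < n" "j < n" for i j
    using that A by (auto simp: B_def strict_upper_def strict_lower_def)
  txt \<open>The diagonal entry (i,i) of BA - AB is twice the squared norm of the part of row i right
    of the diagonal minus that of the part left of it.\<close>
  have row_balance: "(\<Sum>l<n. if i < l then (A $$ (i,l))\<^sup>2 else if l < i then - (A $$ (i,l))\<^sup>2 else 0) = 0"
    if i: "i < n" for i
  proof -
    have "(\<Sum>l<n. B $$ (i,l) * A $$ (l,i)) = (\<Sum>l<n. A $$ (i,l) * B $$ (l,i))"
      using arg_cong[OF comm, of "\<lambda>M. M $$ (i,i)"] Bc A i
      by (simp add: B_def[symmetric] index_mult_mat_sum[of _ n n] del: index_mult_mat)
    moreover have "(\<Sum>l<n. B $$ (i,l) * A $$ (l,i)) - (\<Sum>l<n. A $$ (i,l) * B $$ (l,i))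
       = 2 * (\<Sum>l<n. if i < l then (A $$ (i,l))\<^sup>2 else if l < i then - (A $$ (i,l))\<^sup>2 else 0)"
      unfolding sum_subtractf[symmetric] sum_distrib_left
      by (rule sum.cong) (use i Aij Bij in \<open>auto simp: power2_eq_square\<close>)
    ultimately show ?thesis
      by simp
  qed
  txt \<open>Induction on i: the left part of row i vanishes by symmetry and the induction hypothesis,
    hence so does the right part.\<close>
  have "\<forall>l<n. l \<noteq> i \<longrightarrow> A $$ (i,l) = 0" if "i < n" for i
    using that
  proof (induction i rule: less_induct)
    case (less i)
    have left: "A $$ (i,l) = 0" if "l < i" for l
      using less.IH[of l] that less.prems Aij[of l i] by auto
    have "(\<Sum>l<n. if i < l then (A $$ (i,l))\<^sup>2 else 0) = 0"
      using row_balance[OF less.prems] by (simp add: left cong: if_cong)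
    then have "\<forall>l\<in>{..<n}. (if i < l then (A $$ (i,l))\<^sup>2 else 0) = 0"
      by (subst (asm) sum_nonneg_eq_0_iff) auto
    then have right: "A $$ (i,l) = 0" if "i < l" "l < n" for l
      using that by (metis lessThan_iff power_eq_0_iff zero_neq_numeral)
    show ?case
      using left right by (metis linorder_neqE_nat)
  qed
  then show ?thesis
    unfolding is_diag_def using A by auto
qed

lemma has_real_derivative_index_mult_left:
  assumes A: "A \<in> carrier_mat n n" and c: "\<And>t. \<gamma> t \<in> carrier_mat n n" "V \<in> carrier_mat n n"
    and d: "\<And>p q. p < n \<Longrightarrow> q < n \<Longrightarrow> ((\<lambda>t. \<gamma> t $$ (p,q)) has_real_derivative V $$ (p,q)) (at t0)"
    and pq: "p < n" "q < n"
  shows "((\<lambda>t. (A * \<gamma> t) $$ (p,q)) has_real_derivative (A * V) $$ (p,q)) (at t0)"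
proof -
  have "((\<lambda>t. \<Sum>l<n. A $$ (p,l) * \<gamma> t $$ (l,q)) has_real_derivative (\<Sum>l<n. A $$ (p,l) * V $$ (l,q))) (at t0)"
    by (intro DERIV_sum DERIV_cmult d) (use pq in auto)
  moreover have "(A * \<gamma> t) $$ (p,q) = (\<Sum>l<n. A $$ (p,l) * \<gamma> t $$ (l,q))" for t
    using A c(1) pq by (rule index_mult_mat_sum)
  ultimately show ?thesis
    using A c pq by (simp add: index_mult_mat_sum[of _ n n] del: index_mult_mat)
qed

lemma block_diagonal_if_vertical:
  assumes P0: "P0 \<in> SO_mat n" and P: "P \<in> coset n I P0" and V: "V \<in> carrier_mat n n"
    and vert: "vertical n (coset n I P0) P V"
  shows "block_diagonal n I (transpose_mat P * V)"
proof -
  have PSO: "P \<in> SO_mat n" and coset_P: "coset n I P = coset n I P0"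
    using coset_eq_if_mem[OF P0 P] by simp_all
  obtain \<gamma> where \<gamma>: "\<And>t. \<gamma> t \<in> coset n I P"
     "\<And>p q. p < n \<Longrightarrow> q < n \<Longrightarrow> ((\<lambda>t. \<gamma> t $$ (p,q)) has_real_derivative V $$ (p,q)) (at 0)"
    using vert unfolding vertical_def coset_P by blast
  have G: "transpose_mat P * \<gamma> t \<in> G_grp n I" and \<gamma>c: "\<gamma> t \<in> carrier_mat n n" for t
  proof -
    obtain h where h: "h \<in> G_grp n I" "\<gamma> t = P * h"
      using \<gamma>(1)[of t] by (auto simp: coset_def)
    have "transpose_mat P * \<gamma> t = (transpose_mat P * P) * h"
      using h PSO G_grp_carrier[OF h(1)] by (simp add: SO_mat_carrier assoc_mult_mat[of _ n n _ n _ n])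
    then show "transpose_mat P * \<gamma> t \<in> G_grp n I"
      using h G_grp_carrier[OF h(1)] by (simp add: SO_mat_transpose_mult[OF PSO])
    show "\<gamma> t \<in> carrier_mat n n"
      using h PSO G_grp_carrier[OF h(1)] by (simp add: SO_mat_carrier)
  qed
  show ?thesis
    unfolding block_diagonal_def
  proof (intro allI impI)
    fix p q
    assume pq: "p < n" "q < n" "block_of I p \<noteq> block_of I q"
    have "((\<lambda>t. (transpose_mat P * \<gamma> t) $$ (p,q)) has_real_derivative (transpose_mat P * V) $$ (p,q)) (at 0)"
      using PSO \<gamma>c V \<gamma>(2) pq by (intro has_real_derivative_index_mult_left) (auto simp: SO_mat_carrier)
    moreover have "(\<lambda>t. (transpose_mat P * \<gamma> t) $$ (p,q)) = (\<lambda>t. 0)"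
      using G pq by (auto simp: G_grp_iff block_diagonal_def)
    ultimately show "(transpose_mat P * V) $$ (p,q) = 0"
      using DERIV_unique[OF _ DERIV_const] by simp
  qed
qed

lemma is_diag_if_Mfield_vertical:
  assumes P0: "P0 \<in> SO_mat n" and P: "P \<in> coset n I P0"
    and vert: "vertical n (coset n I P0) P (Mfield n I lam P)"
  shows "is_diag (conjL n I lam P)"
proof -
  have PSO: "P \<in> SO_mat n"
    using coset_eq_if_mem[OF P0 P] by simp
  then have Pc: "P \<in> carrier_mat n n"
    by (rule SO_mat_carrier)
  define A where "A = conjL n I lam P"
  define B where "B = strict_upper A - strict_lower A"
  define X where "X = transpose_mat P * (B * P)"
  have Ac: "A \<in> carrier_mat n n"
    using Pc by (simp add: A_def)
  have Bc: "B \<in> carrier_mat n n"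
    using Ac unfolding B_def strict_upper_def strict_lower_def by (intro minus_carrier_mat) auto
  have Xc: "X \<in> carrier_mat n n"
    using Pc Bc by (simp add: X_def)
  have "Mfield n I lam P = B * P"
    by (simp add: Mfield_def B_def A_def)
  then have "block_diagonal n I X"
    using block_diagonal_if_vertical[OF P0 P _ vert] Bc Pc by (simp add: X_def)
  then have "X * Lam n I lam = Lam n I lam * X"
    by (rule block_diagonal_commute_Lam[OF Xc])
  then have "(P * X * transpose_mat P) * A = A * (P * X * transpose_mat P)"
    using commute_conj_orthogonal[OF Pc Xc Lam_carrier SO_mat_transpose_mult[OF PSO]]
    by (simp add: A_def conjL_def)
  moreover have "P * X * transpose_mat P = B"
    using Pc Bc SO_mat_mult_transpose[OF PSO]
    by (simp add: X_def assoc_mult_mat[of _ n n _ n _ n] flip: assoc_mult_mat[of P n n "transpose_mat P" n])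
  ultimately have "B * A = A * B"
    by simp
  then show ?thesis
    unfolding A_def B_def using Pc by (intro is_diag_if_commute_skew_part[of _ n] transpose_conjL) auto
qed

lemma Mfield_eq_zero_if_is_diag:
  assumes "P \<in> carrier_mat n n" "is_diag (conjL n I lam P)"
  shows "Mfield n I lam P = 0\<^sub>m n n"
proof -
  have "strict_upper (conjL n I lam P) - strict_lower (conjL n I lam P) = 0\<^sub>m n n"
    using assms carrier_matD[OF conjL_carrier[OF assms(1)]]
    by (intro eq_matI) (auto simp: strict_upper_def strict_lower_def is_diag_def)
  then show ?thesis
    using assms(1) by (simp add: Mfield_def)
qed

lemma vertical_zero: "P \<in> C \<Longrightarrow> vertical n C P (0\<^sub>m n n)"
  unfolding vertical_def by (intro exI[of _ "\<lambda>t. P"]) auto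

lemma xi_zero_coset_iff:
  assumes P0: "P0 \<in> SO_mat n"
  shows "xi_zero n I lam (coset n I P0) \<longleftrightarrow> (\<exists>P\<in>coset n I P0. is_diag (conjL n I lam P))"
proof
  assume "xi_zero n I lam (coset n I P0)"
  then show "\<exists>P\<in>coset n I P0. is_diag (conjL n I lam P)"
    unfolding xi_zero_def using is_diag_if_Mfield_vertical[OF P0] by blast
next
  assume "\<exists>P\<in>coset n I P0. is_diag (conjL n I lam P)"
  then obtain P where P: "P \<in> coset n I P0" "is_diag (conjL n I lam P)"
    by blast
  have "Mfield n I lam P = 0\<^sub>m n n"
    using coset_eq_if_mem[OF P0 P(1)] P(2) by (intro Mfield_eq_zero_if_is_diag SO_mat_carrier) auto
  then show "xi_zero n I lam (coset n I P0)"
    unfolding xi_zero_def using P(1) vertical_zero by metis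
qed

section \<open>Multiset permutations and diagonal conjugates\<close>

lemma exists_inj_matching_fibres:
  assumes A: "finite A" and card: "\<And>j. card {a \<in> A. f a = j} = card {a \<in> A. g a = j}"
  shows "\<exists>\<sigma>. inj_on \<sigma> A \<and> \<sigma> ` A \<subseteq> A \<and> (\<forall>a\<in>A. g (\<sigma> a) = f a)"
proof -
  have "\<forall>j. \<exists>h. bij_betw h {a \<in> A. f a = j} {a \<in> A. g a = j}"
    using A card by (intro allI finite_same_card_bij) auto
  then obtain H where H: "\<And>j. bij_betw (H j) {a \<in> A. f a = j} {a \<in> A. g a = j}"
    by metis
  define \<sigma> where "\<sigma> a = H (f a) a" for a
  have \<sigma>: "\<sigma> a \<in> A \<and> g (\<sigma> a) = f a" if "a \<in> A" for a
    using H[of "f a"] that unfolding \<sigma>_def bij_betw_def by auto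
  have "inj_on \<sigma> A"
  proof (rule inj_onI)
    fix a b
    assume ab: "a \<in> A" "b \<in> A" "\<sigma> a = \<sigma> b"
    then have "f a = f b"
      using \<sigma> by metis
    then show "a = b"
      using ab H[of "f a"] unfolding \<sigma>_def bij_betw_def inj_on_def by auto
  qed
  then show ?thesis
    using \<sigma> by blast
qed

definition perm_mat :: "nat \<Rightarrow> (nat \<Rightarrow> nat) \<Rightarrow> real mat" where
  "perm_mat n \<sigma> = mat n n (\<lambda>(p,q). if q = \<sigma> p then 1 else 0)"

lemma perm_mat_carrier [simp]: "perm_mat n \<sigma> \<in> carrier_mat n n"
  by (simp add: perm_mat_def)

lemma index_perm_mat_mult:
  assumes "X \<in> carrier_mat n m" "p < n" "q < m" "\<sigma> p < n"
  shows "(perm_mat n \<sigma> * X) $$ (p,q) = X $$ (\<sigma> p, q)"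
proof -
  have "(perm_mat n \<sigma> * X) $$ (p,q) = (\<Sum>l<n. perm_mat n \<sigma> $$ (p,l) * X $$ (l,q))"
    using assms by (intro index_mult_mat_sum) auto
  also have "\<dots> = (\<Sum>l<n. if l = \<sigma> p then X $$ (l,q) else 0)"
    using assms by (intro sum.cong) (auto simp: perm_mat_def)
  finally show ?thesis
    using assms(4) by simp
qed

lemma perm_mat_conj_diag_of:
  assumes inj: "inj_on \<sigma> {..<n}" and into: "\<sigma> ` {..<n} \<subseteq> {..<n}"
  shows "perm_mat n \<sigma> * diag_of n d * transpose_mat (perm_mat n \<sigma>) = diag_of n (\<lambda>p. d (\<sigma> p))"
proof (rule eq_matI)
  fix p r
  assume "p < dim_row (diag_of n (\<lambda>p. d (\<sigma> p)))" "r < dim_col (diag_of n (\<lambda>p. d (\<sigma> p)))"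
  then have pr: "p < n" "r < n" "\<sigma> p < n" "\<sigma> r < n"
    using into by auto
  have "(perm_mat n \<sigma> * diag_of n d * transpose_mat (perm_mat n \<sigma>)) $$ (p,r)
      = (diag_of n d * transpose_mat (perm_mat n \<sigma>)) $$ (\<sigma> p, r)"
    using pr by (simp add: assoc_mult_mat[of _ n n _ n _ n] index_perm_mat_mult[of _ n n] del: index_mult_mat)
  also have "\<dots> = d (\<sigma> p) * transpose_mat (perm_mat n \<sigma>) $$ (\<sigma> p, r)"
    using pr by (intro index_mult_diag_of_left) auto
  also have "\<dots> = d (\<sigma> p) * (if \<sigma> p = \<sigma> r then 1 else 0)"
    using pr by (simp add: perm_mat_def)
  also have "\<dots> = diag_of n (\<lambda>p. d (\<sigma> p)) $$ (p,r)"
    using pr inj by (auto dest: inj_onD)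
  finally show "(perm_mat n \<sigma> * diag_of n d * transpose_mat (perm_mat n \<sigma>)) $$ (p,r) = diag_of n (\<lambda>p. d (\<sigma> p)) $$ (p,r)" .
qed (auto simp: perm_mat_def)

lemma perm_mat_mult_transpose:
  assumes "inj_on \<sigma> {..<n}" "\<sigma> ` {..<n} \<subseteq> {..<n}"
  shows "perm_mat n \<sigma> * transpose_mat (perm_mat n \<sigma>) = 1\<^sub>m n"
  using perm_mat_conj_diag_of[OF assms, of "\<lambda>_. 1"]
  by (simp add: diag_of_eq_mat_diag right_mult_one_mat[of "perm_mat n \<sigma>" n n])

lemma diag_of_cong: "(\<And>p. p < n \<Longrightarrow> d p = e p) \<Longrightarrow> diag_of n d = diag_of n e"
  by (rule eq_matI) auto

lemma exists_SO_conj_eq_if_orthogonal: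
  assumes Q: "Q \<in> carrier_mat n n" "Q * transpose_mat Q = 1\<^sub>m n"
    and X: "X \<in> carrier_mat n n" and QX: "Q * X * transpose_mat Q = diag_of n e"
  shows "\<exists>P\<in>SO_mat n. P * X * transpose_mat P = diag_of n e"
proof -
  have QtQ: "transpose_mat Q * Q = 1\<^sub>m n"
    using mat_mult_left_right_inverse[OF Q(1) _ Q(2)] Q(1) by simp
  have "det Q * det Q = 1"
    using arg_cong[OF Q(2), of det] Q(1) by (simp add: det_mult[of _ n] det_transpose)
  then consider "det Q = 1" | "det Q = -1"
    by (metis mult_cancel_left1 square_eq_1_iff)
  then show ?thesis
  proof cases
    case 1
    then show ?thesis
      using Q QtQ QX by (auto simp: SO_mat_def)
  next
    case 2
    have "n > 0"
    proof (rule ccontr)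
      assume "\<not> n > 0"
      then have "Q = 1\<^sub>m 0"
        using Q(1) by (intro eq_matI) auto
      then show False
        using 2 by simp
    qed
    txt \<open>Flip the sign of the first row: this fixes the determinant and, diagonal matrices
      commuting, keeps the conjugate diagonal.\<close>
    define s :: "nat \<Rightarrow> real" where "s p = (if p = 0 then -1 else 1)" for p
    define D where "D = diag_of n s"
    have Dc: "D \<in> carrier_mat n n"
      by (simp add: D_def)
    have "D = multrow_mat n 0 (-1)"
      by (rule eq_matI) (auto simp: D_def s_def multrow_mat_def)
    then have detD: "det D = -1"
      using det_multrow_mat[OF \<open>n > 0\<close>] by simp
    have ss: "s p * s p = 1" for p
      by (simp add: s_def)
    have "(\<lambda>p. s p * s p) = (\<lambda>_. 1)"
      by (simp add: ss)
    then have DD: "D * D = 1\<^sub>m n"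
      by (simp add: D_def diag_of_mult_diag_of diag_of_eq_mat_diag)
    define P where "P = D * Q"
    have "transpose_mat P * P = transpose_mat Q * (D * D) * Q"
      using Dc Q(1) by (simp add: P_def D_def transpose_mult[of _ n n _ n] assoc_mult_mat[of _ n n _ n _ n])
    then have PtP: "transpose_mat P * P = 1\<^sub>m n"
      using DD QtQ Q(1) by simp
    have "P * X * transpose_mat P = D * (Q * X * transpose_mat Q) * D"
      using Dc Q(1) X by (simp add: P_def D_def transpose_mult[of _ n n _ n] assoc_mult_mat[of _ n n _ n _ n])
    also have "\<dots> = diag_of n e"
      by (simp add: QX D_def diag_of_mult_diag_of mult.commute[of _ "e _"] mult.assoc ss)
    finally have "P * X * transpose_mat P = diag_of n e" .
    moreover have "det P = 1"
      using det_mult[OF Dc Q(1)] detD 2 by (simp add: P_def)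
    moreover have "P \<in> carrier_mat n n"
      using Dc Q(1) by (simp add: P_def)
    ultimately show ?thesis
      using PtP by (auto simp: SO_mat_def)
  qed
qed

lemma multiset_perms_less: "\<tau> \<in> multiset_perms n k I \<Longrightarrow> p < n \<Longrightarrow> \<tau> p < k"
  by (auto simp: multiset_perms_def)

lemma exists_SO_conjL_eq_diag_of:
  assumes \<tau>: "\<tau> \<in> multiset_perms n k I" and n: "n = (\<Sum>j<k. I j)"
  shows "\<exists>P\<in>SO_mat n. conjL n I lam P = diag_of n (\<lambda>p. lam (\<tau> p))"
proof -
  have "card {p \<in> {0..<n}. \<tau> p = j} = card {q \<in> {0..<n}. block_of I q = j}" for j
  proof (cases "j < k")
    case True
    then show ?thesis
      using \<tau> card_block_of_eq[OF True, of I] n by (simp add: multiset_perms_def)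
  next
    case False
    then have "{p \<in> {0..<n}. \<tau> p = j} = {}" "{q \<in> {0..<n}. block_of I q = j} = {}"
      using multiset_perms_less[OF \<tau>] block_of_bounds[of _ I k] n by fastforce+
    then show ?thesis
      by (simp only: card.empty)
  qed
  then obtain \<sigma> where \<sigma>: "inj_on \<sigma> {0..<n}" "\<sigma> ` {0..<n} \<subseteq> {0..<n}"
    "\<And>p. p \<in> {0..<n} \<Longrightarrow> block_of I (\<sigma> p) = \<tau> p"
    using exists_inj_matching_fibres[of "{0..<n}" \<tau> "block_of I"] by auto
  have "perm_mat n \<sigma> * Lam n I lam * transpose_mat (perm_mat n \<sigma>) = diag_of n (\<lambda>p. lam (\<tau> p))"
    using \<sigma> perm_mat_conj_diag_of[of \<sigma> n] by (auto simp: Lam_def atLeast0LessThan intro: diag_of_cong)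
  then show ?thesis
    using \<sigma>(1,2) exists_SO_conj_eq_if_orthogonal[OF perm_mat_carrier perm_mat_mult_transpose Lam_carrier]
    by (simp add: conjL_def atLeast0LessThan)
qed

lemma sum_sq_row_eq_one:
  fixes P :: "real mat"
  assumes "P \<in> carrier_mat n n" "P * transpose_mat P = 1\<^sub>m n" "p < n"
  shows "(\<Sum>q<n. (P $$ (p,q))\<^sup>2) = 1"
proof -
  have "(P * transpose_mat P) $$ (p,p) = (\<Sum>q<n. P $$ (p,q) * transpose_mat P $$ (q,p))"
    using assms by (intro index_mult_mat_sum) auto
  also have "\<dots> = (\<Sum>q<n. (P $$ (p,q))\<^sup>2)"
    using assms by (intro sum.cong) (auto simp: power2_eq_square)
  finally show ?thesis
    using assms by simp
qed

lemma card_fibres_eq_if_orthogonal_support: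
  fixes P :: "real mat"
  assumes P: "P \<in> carrier_mat n n" "P * transpose_mat P = 1\<^sub>m n" "transpose_mat P * P = 1\<^sub>m n"
    and supp: "\<And>p q. p < n \<Longrightarrow> q < n \<Longrightarrow> P $$ (p,q) \<noteq> 0 \<Longrightarrow> f p = g q"
  shows "card {p \<in> {0..<n}. f p = j} = card {q \<in> {0..<n}. g q = j}"
proof -
  define R where "R = {p \<in> {..<n}. f p = j}"
  define T where "T = {q \<in> {..<n}. g q = j}"
  have col: "(\<Sum>p<n. (P $$ (p,q))\<^sup>2) = 1" if "q < n" for q
    using sum_sq_row_eq_one[of "transpose_mat P" n q] P that by simp
  txt \<open>Both cardinalities equal the sum of the squared entries of the block R \<times> T of P.\<close>
  have "real (card R) = (\<Sum>p\<in>R. \<Sum>q<n. (P $$ (p,q))\<^sup>2)"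
    using sum_sq_row_eq_one[OF P(1,2)] by (simp add: R_def)
  also have "\<dots> = (\<Sum>p\<in>R. \<Sum>q\<in>T. (P $$ (p,q))\<^sup>2)"
    using supp by (intro sum.cong refl sum.mono_neutral_right) (auto simp: R_def T_def)
  also have "\<dots> = (\<Sum>q\<in>T. \<Sum>p\<in>R. (P $$ (p,q))\<^sup>2)"
    by (rule sum.swap)
  also have "\<dots> = (\<Sum>q\<in>T. \<Sum>p<n. (P $$ (p,q))\<^sup>2)"
    using supp by (intro sum.cong refl sum.mono_neutral_left) (auto simp: R_def T_def)
  also have "\<dots> = real (card T)"
    using col by (simp add: T_def)
  finally show ?thesis
    by (simp add: R_def T_def atLeast0LessThan)
qed

lemma conjL_mult_self: "P \<in> SO_mat n \<Longrightarrow> conjL n I lam P * P = P * Lam n I lam"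
  unfolding conjL_def
  by (simp add: SO_mat_carrier assoc_mult_mat[of _ n n _ n _ n] SO_mat_transpose_mult right_mult_one_mat[of _ n n])

lemma transpose_mult_conjL:
  assumes "P \<in> SO_mat n"
  shows "transpose_mat P * conjL n I lam P = Lam n I lam * transpose_mat P"
proof -
  have "transpose_mat P * conjL n I lam P = (transpose_mat P * P) * Lam n I lam * transpose_mat P"
    using SO_mat_carrier[OF assms] by (simp add: conjL_def assoc_mult_mat[of _ n n _ n _ n])
  then show ?thesis
    using SO_mat_carrier[OF assms] by (simp add: SO_mat_transpose_mult[OF assms] left_mult_one_mat[OF Lam_carrier])
qed

lemma exists_multiset_perm_if_is_diag_conjL:
  assumes lam: "inj_on lam {..<k}" and n: "n = (\<Sum>j<k. I j)"
    and P: "P \<in> SO_mat n" and diag: "is_diag (conjL n I lam P)"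
  shows "\<exists>\<tau>\<in>multiset_perms n k I. conjL n I lam P = diag_of n (\<lambda>p. lam (\<tau> p))"
proof -
  have Pc: "P \<in> carrier_mat n n"
    using P by (rule SO_mat_carrier)
  define d where "d p = conjL n I lam P $$ (p,p)" for p
  have A: "conjL n I lam P = diag_of n d"
    unfolding d_def using Pc diag by (intro is_diag_eq_diag_of) auto
  have block_less: "block_of I q < k" if "q < n" for q
    using block_of_bounds that n by blast
  have nz: "d p = lam (block_of I q)" if "p < n" "q < n" "P $$ (p,q) \<noteq> 0" for p q
  proof -
    have "diag_of n d * P = P * Lam n I lam"
      using conjL_mult_self[OF P, of I lam] by (simp add: A)
    then have "(diag_of n d * P) $$ (p,q) = (P * Lam n I lam) $$ (p,q)"
      by (simp only:)
    then show ?thesis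
      using that Pc by (simp add: Lam_def index_mult_diag_of_left index_mult_diag_of_right del: index_mult_mat)
  qed
  have "\<exists>q<n. P $$ (p,q) \<noteq> 0" if "p < n" for p
    using sum_sq_row_eq_one[OF Pc SO_mat_mult_transpose[OF P] that]
    by (metis (no_types, lifting) lessThan_iff power_zero_numeral sum.neutral zero_neq_one)
  then obtain col where col: "\<And>p. p < n \<Longrightarrow> col p < n \<and> P $$ (p, col p) \<noteq> 0"
    by metis
  define \<tau> where "\<tau> p = (if p < n then block_of I (col p) else undefined)" for p
  have \<tau>: "\<tau> p < k \<and> d p = lam (\<tau> p)" if "p < n" for p
    using col[OF that] nz[OF that] block_less by (simp add: \<tau>_def that)
  have supp: "\<tau> p = block_of I q" if "p < n" "q < n" "P $$ (p,q) \<noteq> 0" for p q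
    using inj_onD[OF lam] \<tau>[OF that(1)] nz[OF that] block_less[OF that(2)] by auto
  have "card {p \<in> {0..<n}. \<tau> p = j} = I j" if "j < k" for j
    using card_fibres_eq_if_orthogonal_support[OF Pc SO_mat_mult_transpose[OF P] SO_mat_transpose_mult[OF P] supp]
      card_block_of_eq[OF that, of I] n by simp
  then have "\<tau> \<in> multiset_perms n k I"
    using \<tau> by (auto simp: multiset_perms_def \<tau>_def)
  moreover have "conjL n I lam P = diag_of n (\<lambda>p. lam (\<tau> p))"
    unfolding A using \<tau> by (auto intro: diag_of_cong)
  ultimately show ?thesis
    by blast
qed

lemma coset_eq_if_conjL_eq:
  assumes lam: "inj_on lam {..<k}" and n: "n = (\<Sum>j<k. I j)"
    and P: "P \<in> SO_mat n" and Q: "Q \<in> SO_mat n" and eq: "conjL n I lam P = conjL n I lam Q"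
  shows "coset n I P = coset n I Q"
proof -
  have Pc: "P \<in> carrier_mat n n" and Qc: "Q \<in> carrier_mat n n"
    using P Q by (simp_all add: SO_mat_carrier)
  define g where "g = transpose_mat Q * P"
  have gc: "g \<in> carrier_mat n n"
    using Pc Qc by (simp add: g_def)
  have "g * Lam n I lam = transpose_mat Q * conjL n I lam Q * P"
    using Pc Qc by (simp add: g_def assoc_mult_mat[of _ n n _ n _ n] flip: conjL_mult_self[OF P] eq)
  also have "\<dots> = Lam n I lam * g"
    using Pc Qc by (simp add: g_def transpose_mult_conjL[OF Q] assoc_mult_mat[of _ n n _ n _ n])
  finally have "block_diagonal n I g"
    by (rule block_diagonal_if_commute_Lam[OF lam n gc])
  then have g: "g \<in> G_grp n I"
    using SO_mat_mult[OF SO_mat_transpose[OF Q] P] by (simp add: G_grp_iff g_def)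
  have "Q * g = P"
    using Pc Qc SO_mat_mult_transpose[OF Q]
    by (simp add: g_def flip: assoc_mult_mat[of Q n n "transpose_mat Q" n P n])
  then show ?thesis
    using coset_mult_G_grp[OF Qc g] by simp
qed

lemma multiset_perm_eq_if_diag_of_eq:
  assumes lam: "inj_on lam {..<k}" and \<tau>: "\<tau> \<in> multiset_perms n k I" "\<tau>' \<in> multiset_perms n k I"
    and eq: "diag_of n (\<lambda>p. lam (\<tau> p)) = diag_of n (\<lambda>p. lam (\<tau>' p))"
  shows "\<tau> = \<tau>'"
proof (rule extensionalityI[of _ "{0..<n}"])
  show "\<tau> \<in> extensional {0..<n}" "\<tau>' \<in> extensional {0..<n}"
    using \<tau> by (auto simp: multiset_perms_def PiE_def)
  fix p
  assume "p \<in> {0..<n}"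
  then have "p < n"
    by simp
  then have "lam (\<tau> p) = lam (\<tau>' p)"
    using arg_cong[OF eq, of "\<lambda>M. M $$ (p,p)"] by simp
  then show "\<tau> p = \<tau>' p"
    using inj_onD[OF lam] multiset_perms_less[OF _ \<open>p < n\<close>] \<tau> by blast
qed

definition coset_of_multiset_perm :: "nat \<Rightarrow> (nat \<Rightarrow> nat) \<Rightarrow> (nat \<Rightarrow> real) \<Rightarrow> (nat \<Rightarrow> nat) \<Rightarrow> real mat set" where
  "coset_of_multiset_perm n I lam \<tau> =
     coset n I (SOME P. P \<in> SO_mat n \<and> conjL n I lam P = diag_of n (\<lambda>p. lam (\<tau> p)))"

lemma coset_of_multiset_perm_eq:
  assumes "\<tau> \<in> multiset_perms n k I" "n = (\<Sum>j<k. I j)"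
  obtains P where "P \<in> SO_mat n" "conjL n I lam P = diag_of n (\<lambda>p. lam (\<tau> p))"
    "coset_of_multiset_perm n I lam \<tau> = coset n I P"
  using someI_ex[OF exists_SO_conjL_eq_diag_of[OF assms, of lam, unfolded Bex_def]]
  unfolding coset_of_multiset_perm_def by blast

lemma conjL_on_coset_of_multiset_perm:
  assumes "\<tau> \<in> multiset_perms n k I" "n = (\<Sum>j<k. I j)" "P \<in> coset_of_multiset_perm n I lam \<tau>"
  shows "conjL n I lam P = diag_of n (\<lambda>p. lam (\<tau> p))"
proof -
  obtain Q where Q: "Q \<in> SO_mat n" "conjL n I lam Q = diag_of n (\<lambda>p. lam (\<tau> p))"
    "coset_of_multiset_perm n I lam \<tau> = coset n I Q"
    using coset_of_multiset_perm_eq[OF assms(1,2)] .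
  obtain g where "g \<in> G_grp n I" "P = Q * g"
    using assms(3) Q(3) by (auto simp: coset_def)
  then show ?thesis
    using conjL_mult_G_grp[OF SO_mat_carrier[OF Q(1)]] Q(2) by simp
qed

lemma bij_betw_coset_of_multiset_perm:
  assumes lam: "inj_on lam {..<k}" and n: "n = (\<Sum>j<k. I j)"
  shows "bij_betw (coset_of_multiset_perm n I lam) (multiset_perms n k I) {C \<in> Flag n I. xi_zero n I lam C}"
    (is "bij_betw ?f ?S ?Z")
proof (rule bij_betw_imageI)
  show "inj_on ?f ?S"
  proof (rule inj_onI)
    fix \<tau> \<tau>'
    assume \<tau>: "\<tau> \<in> ?S" "\<tau>' \<in> ?S" and eq: "?f \<tau> = ?f \<tau>'"
    obtain P where P: "P \<in> SO_mat n" "conjL n I lam P = diag_of n (\<lambda>p. lam (\<tau> p))" "?f \<tau> = coset n I P"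
      using coset_of_multiset_perm_eq[OF \<tau>(1) n] .
    have "P \<in> ?f \<tau>'"
      using eq P(1,3) coset_self[OF SO_mat_carrier] by metis
    then have "diag_of n (\<lambda>p. lam (\<tau> p)) = diag_of n (\<lambda>p. lam (\<tau>' p))"
      using conjL_on_coset_of_multiset_perm[OF \<tau>(2) n] P(2) by simp
    then show "\<tau> = \<tau>'"
      using multiset_perm_eq_if_diag_of_eq[OF lam \<tau>] by simp
  qed
  show "?f ` ?S = ?Z"
  proof (intro equalityI subsetI)
    fix C
    assume "C \<in> ?f ` ?S"
    then obtain \<tau> where \<tau>: "\<tau> \<in> ?S" "C = ?f \<tau>"
      by blast
    obtain P where P: "P \<in> SO_mat n" "conjL n I lam P = diag_of n (\<lambda>p. lam (\<tau> p))" "C = coset n I P"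
      using coset_of_multiset_perm_eq[OF \<tau>(1) n] \<tau>(2) by metis
    have "xi_zero n I lam C"
      unfolding P(3) xi_zero_coset_iff[OF P(1)]
      using P(1,2) coset_self[OF SO_mat_carrier] is_diag_diag_of by metis
    then show "C \<in> ?Z"
      using P(1,3) by (auto simp: Flag_def)
  next
    fix C
    assume C: "C \<in> ?Z"
    then obtain Q where Q: "Q \<in> SO_mat n" "C = coset n I Q"
      by (auto simp: Flag_def)
    then obtain P where P: "P \<in> C" "is_diag (conjL n I lam P)"
      using C xi_zero_coset_iff by blast
    have PSO: "P \<in> SO_mat n" and CP: "C = coset n I P"
      using coset_eq_if_mem[OF Q(1)] P(1) Q(2) by auto
    obtain \<tau> where \<tau>: "\<tau> \<in> ?S" "conjL n I lam P = diag_of n (\<lambda>p. lam (\<tau> p))"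
      using exists_multiset_perm_if_is_diag_conjL[OF lam n PSO P(2)] by blast
    obtain P' where P': "P' \<in> SO_mat n" "conjL n I lam P' = diag_of n (\<lambda>p. lam (\<tau> p))" "?f \<tau> = coset n I P'"
      using coset_of_multiset_perm_eq[OF \<tau>(1) n] .
    have "C = ?f \<tau>"
      using coset_eq_if_conjL_eq[OF lam n PSO P'(1)] \<tau>(2) P'(2,3) CP by simp
    then show "C \<in> ?f ` ?S"
      using \<tau>(1) by blast
  qed
qed

theorem proposition4p1:
  fixes k n :: nat and I :: "nat \<Rightarrow> nat" and lam :: "nat \<Rightarrow> real"
  assumes lam_inc: "\<And>a b. a < b \<Longrightarrow> b < k \<Longrightarrow> lam a < lam b"
    and I_pos: "\<And>j. j < k \<Longrightarrow> I j > 0"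
    and n_def: "n = (\<Sum>j<k. I j)"
  shows "(\<forall>C\<in>Flag n I. xi_zero n I lam C \<longleftrightarrow> (\<exists>P\<in>C. is_diag (conjL n I lam P)))
       \<and> (\<exists>f. bij_betw f (multiset_perms n k I) {C \<in> Flag n I. xi_zero n I lam C}
             \<and> (\<forall>\<tau>\<in>multiset_perms n k I. \<forall>P\<in>f \<tau>.
                  conjL n I lam P = diag_of n (\<lambda>p. lam (\<tau> p))))"
proof -
  have lam: "inj_on lam {..<k}"
    using lam_inc by (intro inj_onI) (metis lessThan_iff linorder_neqE_nat less_irrefl)
  have "xi_zero n I lam C \<longleftrightarrow> (\<exists>P\<in>C. is_diag (conjL n I lam P))" if "C \<in> Flag n I" for C
    using that xi_zero_coset_iff by (auto simp: Flag_def)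
  moreover note bij_betw_coset_of_multiset_perm[OF lam n_def]
  moreover note conjL_on_coset_of_multiset_perm[OF _ n_def]
  ultimately show ?thesis
    by blast
qed

end
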